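(* Let $P_{XY}$ be a probability distribution on $\mathcal X\times\mathcal Y$ and $P'_{X'Y'}$ one on $\mathcal X'\times\mathcal Y'$ (finite sets), and let $(X,X')$ and $(Y,Y')$ be jointly distributed according to $P_{XY}\times P'_{X'Y'}$. Then $U(XX';YY')=U(X;Y)+U(X';Y')$.
   Context: $D(P\|Q)=\sum P\log(P/Q)$ ($0\log(0/q)=0$; $+\infty$ if $P\not\ll Q$). For a joint distribution $P_{AB}$ with $A$-marginal $P_A$, $U(A;B)=\min_{Q_B}D(P_A\times Q_B\|P_{AB})$; here $U(XX';YY')$ means this quantity with $A=(X,X')$, $B=(Y,Y')$. *)

theory Defs
  imports "HOL-Analysis.Analysis"
begin

definition is_dist :: "('a::finite \<Rightarrow> real) \<Rightarrow> bool" where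
  "is_dist P \<longleftrightarrow> (\<forall>x. 0 \<le> P x) \<and> (\<Sum>x\<in>UNIV. P x) = 1"

definition KL :: "('a::finite \<Rightarrow> real) \<Rightarrow> ('a \<Rightarrow> real) \<Rightarrow> ereal" where
  "KL P Q = (if \<forall>x. P x \<noteq> 0 \<longrightarrow> Q x \<noteq> 0
     then ereal (\<Sum>x\<in>UNIV. if P x = 0 then 0 else P x * ln (P x / Q x))
     else \<infinity>)"

definition margA :: "('a::finite \<times> 'b::finite \<Rightarrow> real) \<Rightarrow> 'a \<Rightarrow> real" where
  "margA P a = (\<Sum>b\<in>UNIV. P (a, b))"

definition U :: "('a::finite \<times> 'b::finite \<Rightarrow> real) \<Rightarrow> ereal" where
  "U P = (INF Q \<in> {Q :: 'b \<Rightarrow> real. is_dist Q}. KL (\<lambda>(a, b). margA P a * Q b) P)"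

end

theory Submission
  imports Defs
begin

text \<open>Write \<open>P(b|a) = P(a,b) / P\<^sub>A(a)\<close> and let \<open>g(b) = \<Prod>\<^sub>a P(b|a)^P\<^sub>A(a)\<close> be the geometric
  mean of the conditionals, weighted by the marginal. Then
  \<open>D(P\<^sub>A \<times> Q \<parallel> P) = \<Sum>\<^sub>b Q(b) (ln Q(b) - ln g(b))\<close>, which by Gibbs' inequality is at least
  \<open>-ln (\<Sum>\<^sub>b g(b))\<close>, with equality for \<open>Q \<propto> g\<close>; so \<open>U(A;B) = -ln (\<Sum>\<^sub>b g(b))\<close>
  (\<open>\<infinity>\<close> if the sum vanishes). For a product distribution both the marginal and the
  conditionals factor, hence so do \<open>g\<close> and \<open>\<Sum>\<^sub>b g(b)\<close>, and \<open>-ln\<close> turns the product into a sum.\<close>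

lemma sum_UNIV_pair:
  "(\<Sum>z\<in>(UNIV :: ('a::finite \<times> 'b::finite) set). f z) = (\<Sum>a\<in>UNIV. \<Sum>b\<in>UNIV. f (a, b))"
  by (metis UNIV_Times_UNIV sum.cartesian_product')

lemma sum_nonzero_eq_sum_UNIV:
  "(\<Sum>a\<in>{a. f a \<noteq> 0}. f a) = (\<Sum>a\<in>UNIV. (f (a::'a::finite) :: real))"
  by (rule sum.mono_neutral_left) auto

lemma is_dist_nonneg: "is_dist P \<Longrightarrow> P z \<ge> 0"
  by (simp add: is_dist_def)

lemma margA_nonneg: "is_dist P \<Longrightarrow> margA P a \<ge> 0"
  unfolding margA_def by (simp add: is_dist_nonneg sum_nonneg)

lemma sum_margA: "is_dist P \<Longrightarrow> (\<Sum>a\<in>UNIV. margA P a) = 1"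
  unfolding margA_def using sum_UNIV_pair[of P] by (simp add: is_dist_def)

lemma sum_margA_nonzero: "is_dist P \<Longrightarrow> (\<Sum>a\<in>{a. margA P a \<noteq> 0}. margA P a) = 1"
  using sum_nonzero_eq_sum_UNIV[of "margA P"] sum_margA by simp

lemma ex_margA_nonzero: "is_dist P \<Longrightarrow> \<exists>a. margA P a \<noteq> 0"
  using sum_margA[of P] by (metis sum.neutral zero_neq_one)

lemma is_dist_ex_nonzero: "is_dist Q \<Longrightarrow> \<exists>b. Q b \<noteq> 0"
  by (metis is_dist_def sum.neutral zero_neq_one)


definition cond_supported :: "('a::finite \<times> 'b::finite \<Rightarrow> real) \<Rightarrow> 'b \<Rightarrow> bool" where
  "cond_supported P b \<longleftrightarrow> (\<forall>a. margA P a \<noteq> 0 \<longrightarrow> P (a, b) \<noteq> 0)"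

definition avg_log_cond :: "('a::finite \<times> 'b::finite \<Rightarrow> real) \<Rightarrow> 'b \<Rightarrow> real" where
  "avg_log_cond P b = (\<Sum>a\<in>{a. margA P a \<noteq> 0}. margA P a * ln (P (a, b) / margA P a))"

text \<open>The geometric mean \<open>g(b)\<close>; \<open>cond_supported\<close> accounts for the factors \<open>0^w = 0\<close>, \<open>w > 0\<close>.\<close>
definition geomean_cond :: "('a::finite \<times> 'b::finite \<Rightarrow> real) \<Rightarrow> 'b \<Rightarrow> real" where
  "geomean_cond P b = (if cond_supported P b then exp (avg_log_cond P b) else 0)"

definition geomean_mass :: "('a::finite \<times> 'b::finite \<Rightarrow> real) \<Rightarrow> real" where
  "geomean_mass P = (\<Sum>b\<in>UNIV. geomean_cond P b)"

lemma geomean_cond_nonneg: "geomean_cond P b \<ge> 0"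
  by (simp add: geomean_cond_def)

lemma geomean_mass_nonneg: "geomean_mass P \<ge> 0"
  unfolding geomean_mass_def by (simp add: geomean_cond_nonneg sum_nonneg)

lemma KL_indep_summand:
  assumes P: "is_dist P" and Qb: "q > 0" and supp: "cond_supported P b"
  shows "(\<Sum>a\<in>UNIV. if margA P a * q = 0 then 0
            else margA P a * q * ln (margA P a * q / P (a, b)))
       = q * (ln q - avg_log_cond P b)"
proof -
  let ?S = "{a. margA P a \<noteq> 0}"
  have summand: "margA P a * q * ln (margA P a * q / P (a, b))
      = q * (margA P a * ln q - margA P a * ln (P (a, b) / margA P a))" if "a \<in> ?S" for a
  proof -
    have "margA P a > 0" using that margA_nonneg[OF P] by (simp add: less_le)
    moreover have "P (a, b) > 0"
      using that supp is_dist_nonneg[OF P] unfolding cond_supported_def by (simp add: less_le)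
    ultimately have "ln (margA P a * q / P (a, b)) = ln q - ln (P (a, b) / margA P a)"
      using Qb by (simp add: ln_div ln_mult)
    thus ?thesis by (simp only: right_diff_distrib) (simp add: algebra_simps)
  qed
  have "(\<Sum>a\<in>UNIV. if margA P a * q = 0 then 0
            else margA P a * q * ln (margA P a * q / P (a, b)))
      = (\<Sum>a\<in>?S. margA P a * q * ln (margA P a * q / P (a, b)))"
    using Qb by (intro sum.mono_neutral_cong_right) auto
  also have "\<dots> = (\<Sum>a\<in>?S. q * (margA P a * ln q - margA P a * ln (P (a, b) / margA P a)))"
    using summand by (rule sum.cong[OF refl])
  also have "\<dots> = q * (ln q * (\<Sum>a\<in>?S. margA P a) - avg_log_cond P b)"
    unfolding avg_log_cond_def
    by (simp add: sum_distrib_left[symmetric] sum_subtractf sum_distrib_right[symmetric] mult.commute)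
  finally show ?thesis using sum_margA_nonzero[OF P] by simp
qed

lemma KL_indep_eq:
  assumes P: "is_dist P" and Q: "is_dist Q"
  shows "KL (\<lambda>(a, b). margA P a * Q b) P =
    (if \<forall>b. Q b \<noteq> 0 \<longrightarrow> cond_supported P b
     then ereal (\<Sum>b\<in>UNIV. if Q b = 0 then 0 else Q b * (ln (Q b) - avg_log_cond P b))
     else \<infinity>)"
proof -
  have abs_cont: "(\<forall>z. (\<lambda>(a, b). margA P a * Q b) z \<noteq> 0 \<longrightarrow> P z \<noteq> 0)
      \<longleftrightarrow> (\<forall>b. Q b \<noteq> 0 \<longrightarrow> cond_supported P b)"
    unfolding cond_supported_def by auto
  show ?thesis
  proof (cases "\<forall>b. Q b \<noteq> 0 \<longrightarrow> cond_supported P b")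
    case supp: True
    have column: "(\<Sum>a\<in>UNIV. if margA P a * Q b = 0 then 0
            else margA P a * Q b * ln (margA P a * Q b / P (a, b)))
        = (if Q b = 0 then 0 else Q b * (ln (Q b) - avg_log_cond P b))" for b
      using supp is_dist_nonneg[OF Q, of b] KL_indep_summand[OF P, of "Q b" b]
      by (cases "Q b = 0") (auto simp: less_le)
    have "(\<Sum>z\<in>UNIV. if (case z of (a, b) \<Rightarrow> margA P a * Q b) = 0 then 0
          else (case z of (a, b) \<Rightarrow> margA P a * Q b) * ln ((case z of (a, b) \<Rightarrow> margA P a * Q b) / P z))
        = (\<Sum>b\<in>UNIV. \<Sum>a\<in>UNIV. if margA P a * Q b = 0 then 0
          else margA P a * Q b * ln (margA P a * Q b / P (a, b)))"
      unfolding sum_UNIV_pair split_conv by (rule sum.swap)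
    thus ?thesis unfolding KL_def abs_cont using supp column by simp
  qed (auto simp: KL_def abs_cont cond_supported_def)
qed

text \<open>Gibbs' inequality, via \<open>ln x \<le> x - 1\<close> applied termwise to \<open>x = g(b) / (Q(b) Z)\<close>.\<close>
lemma KL_indep_lower_bound:
  assumes Q: "is_dist Q" and supp: "\<forall>b. Q b \<noteq> 0 \<longrightarrow> cond_supported P b"
    and Z: "geomean_mass P > 0"
  shows "(\<Sum>b\<in>UNIV. if Q b = 0 then 0 else Q b * (ln (Q b) - avg_log_cond P b))
       \<ge> - ln (geomean_mass P)"
proof -
  let ?Z = "geomean_mass P" and ?g = "geomean_cond P"
  have termwise: "(if Q b = 0 then 0 else Q b * (ln (Q b) - avg_log_cond P b))
      \<ge> Q b - ?g b / ?Z - Q b * ln ?Z" for b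
  proof (cases "Q b = 0")
    case True thus ?thesis using geomean_cond_nonneg[of P b] Z by simp
  next
    case False
    have Qb: "Q b > 0" using False is_dist_nonneg[OF Q] by (simp add: less_le)
    have g: "?g b = exp (avg_log_cond P b)" using supp False by (simp add: geomean_cond_def)
    define x where "x = ?g b / (Q b * ?Z)"
    have "x > 0" unfolding x_def g using Qb Z by simp
    hence "ln x \<le> x - 1" by (rule ln_le_minus_one)
    hence "Q b * ln x \<le> Q b * (x - 1)" using Qb by (intro mult_left_mono) auto
    moreover have "ln x = avg_log_cond P b - ln (Q b) - ln ?Z"
      unfolding x_def g using Qb Z by (simp add: ln_div ln_mult)
    moreover have "Q b * x = ?g b / ?Z" unfolding x_def using Qb by simp
    ultimately show ?thesis using False by (simp add: algebra_simps)
  qed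
  have "(\<Sum>b\<in>UNIV. Q b - ?g b / ?Z - Q b * ln ?Z) = 1 - ?Z / ?Z - ln ?Z"
    using Q unfolding is_dist_def geomean_mass_def
    by (simp add: sum_subtractf sum_divide_distrib[symmetric] sum_distrib_right[symmetric])
  also have "\<dots> = - ln ?Z" using Z by simp
  finally show ?thesis
    using sum_mono[of UNIV "\<lambda>b. Q b - ?g b / ?Z - Q b * ln ?Z", OF termwise] by simp
qed

lemma KL_indep_gibbs:
  assumes P: "is_dist P" and Z: "geomean_mass P > 0"
  defines "Q \<equiv> \<lambda>b. geomean_cond P b / geomean_mass P"
  shows "is_dist Q" and "KL (\<lambda>(a, b). margA P a * Q b) P = ereal (- ln (geomean_mass P))"
proof -
  have "(\<Sum>b\<in>UNIV. Q b) = geomean_mass P / geomean_mass P"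
    unfolding Q_def geomean_mass_def by (rule sum_divide_distrib[symmetric])
  thus Q: "is_dist Q"
    unfolding is_dist_def using Z by (simp add: Q_def geomean_cond_nonneg)
  have supp: "\<forall>b. Q b \<noteq> 0 \<longrightarrow> cond_supported P b"
    unfolding Q_def geomean_cond_def by auto
  have "(if Q b = 0 then 0 else Q b * (ln (Q b) - avg_log_cond P b))
      = Q b * (- ln (geomean_mass P))" for b
  proof (cases "Q b = 0")
    case False
    with supp have "cond_supported P b" by blast
    hence "Q b = exp (avg_log_cond P b) / geomean_mass P"
      unfolding Q_def by (simp add: geomean_cond_def)
    hence "ln (Q b) = avg_log_cond P b - ln (geomean_mass P)" using Z by (simp add: ln_div)
    thus ?thesis using False by simp
  qed simp
  moreover have "(\<Sum>b\<in>UNIV. Q b * (- ln (geomean_mass P))) = - ln (geomean_mass P)"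
    using Q unfolding is_dist_def by (simp add: sum_distrib_right[symmetric] sum_negf)
  ultimately show "KL (\<lambda>(a, b). margA P a * Q b) P = ereal (- ln (geomean_mass P))"
    using KL_indep_eq[OF P Q] supp by simp
qed

lemma KL_indep_infinite:
  assumes P: "is_dist P" and Q: "is_dist Q" and Z: "geomean_mass P = 0"
  shows "KL (\<lambda>(a, b). margA P a * Q b) P = \<infinity>"
proof -
  obtain b where "Q b \<noteq> 0" using is_dist_ex_nonzero[OF Q] by blast
  moreover have "geomean_cond P b = 0"
    using Z sum_nonneg_eq_0_iff[of UNIV "geomean_cond P"]
    unfolding geomean_mass_def by (simp add: geomean_cond_nonneg)
  hence "\<not> cond_supported P b" by (simp add: geomean_cond_def split: if_splits)
  ultimately show ?thesis using KL_indep_eq[OF P Q] by auto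
qed

lemma U_eq_neg_ln_geomean_mass:
  assumes P: "is_dist (P :: 'a::finite \<times> 'b::finite \<Rightarrow> real)"
  shows "U P = (if geomean_mass P = 0 then \<infinity> else ereal (- ln (geomean_mass P)))"
proof (cases "geomean_mass P = 0")
  case True
  have "U P \<ge> \<infinity>"
    unfolding U_def by (rule INF_greatest) (simp add: KL_indep_infinite[OF P _ True])
  thus ?thesis using True by simp
next
  case False
  hence Z: "geomean_mass P > 0" using geomean_mass_nonneg[of P] by simp
  have "U P \<ge> ereal (- ln (geomean_mass P))"
    unfolding U_def
    by (rule INF_greatest) (use KL_indep_eq[OF P] KL_indep_lower_bound[OF _ _ Z] in auto)
  moreover have "U P \<le> ereal (- ln (geomean_mass P))"
    unfolding U_def using KL_indep_gibbs[OF P Z] by (intro INF_lower2) auto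
  ultimately show ?thesis using False by simp
qed


definition pair_product ::
    "('x::finite \<times> 'y::finite \<Rightarrow> real) \<Rightarrow> ('x'::finite \<times> 'y'::finite \<Rightarrow> real)
     \<Rightarrow> ('x \<times> 'x') \<times> ('y \<times> 'y') \<Rightarrow> real" where
  "pair_product P P' = (\<lambda>((x, x'), (y, y')). P (x, y) * P' (x', y'))"

lemma margA_pair_product: "margA (pair_product P P') (x, x') = margA P x * margA P' x'"
  unfolding margA_def pair_product_def sum_UNIV_pair by (simp add: sum_product)

lemma is_dist_pair_product:
  assumes P: "is_dist P" and P': "is_dist P'"
  shows "is_dist (pair_product P P')"
proof -
  have "(\<Sum>z\<in>UNIV. pair_product P P' z) = (\<Sum>x\<in>UNIV. \<Sum>x'\<in>UNIV. margA (pair_product P P') (x, x'))"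
    unfolding margA_def sum_UNIV_pair by simp
  also have "\<dots> = (\<Sum>x\<in>UNIV. margA P x) * (\<Sum>x'\<in>UNIV. margA P' x')"
    by (simp add: margA_pair_product sum_product)
  finally show ?thesis
    using P P' sum_margA[OF P] sum_margA[OF P']
    by (auto simp: is_dist_def pair_product_def split: prod.splits)
qed

lemma cond_supported_pair_product:
  assumes P: "is_dist P" and P': "is_dist P'"
  shows "cond_supported (pair_product P P') (y, y') \<longleftrightarrow> cond_supported P y \<and> cond_supported P' y'"
proof
  assume supp: "cond_supported (pair_product P P') (y, y')"
  have "P (x, y) \<noteq> 0 \<and> P' (x', y') \<noteq> 0" if "margA P x \<noteq> 0" "margA P' x' \<noteq> 0" for x x'
  proof -
    have "pair_product P P' ((x, x'), (y, y')) \<noteq> 0"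
      using supp that unfolding cond_supported_def by (simp add: margA_pair_product)
    thus ?thesis by (simp add: pair_product_def)
  qed
  moreover obtain x0 where "margA P x0 \<noteq> 0" using ex_margA_nonzero[OF P] by blast
  moreover obtain x0' where "margA P' x0' \<noteq> 0" using ex_margA_nonzero[OF P'] by blast
  ultimately show "cond_supported P y \<and> cond_supported P' y'"
    unfolding cond_supported_def by blast
next
  assume "cond_supported P y \<and> cond_supported P' y'"
  thus "cond_supported (pair_product P P') (y, y')"
    unfolding cond_supported_def by (auto simp: margA_pair_product, simp add: pair_product_def)
qed

lemma avg_log_cond_pair_product:
  assumes P: "is_dist P" and P': "is_dist P'"
    and supp: "cond_supported P y" "cond_supported P' y'"
  shows "avg_log_cond (pair_product P P') (y, y') = avg_log_cond P y + avg_log_cond P' y'"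
proof -
  let ?S = "{x. margA P x \<noteq> 0}" and ?S' = "{x'. margA P' x' \<noteq> 0}"
  let ?L = "\<lambda>x. margA P x * ln (P (x, y) / margA P x)"
  let ?L' = "\<lambda>x'. margA P' x' * ln (P' (x', y') / margA P' x')"
  have supp_prod: "{a. margA (pair_product P P') a \<noteq> 0} = ?S \<times> ?S'"
    by (auto simp: margA_pair_product)
  have summand: "margA P x * margA P' x' * ln (P (x, y) * P' (x', y') / (margA P x * margA P' x'))
      = margA P' x' * ?L x + margA P x * ?L' x'"
    if "x \<in> ?S" "x' \<in> ?S'" for x x'
  proof -
    have "margA P x > 0" "margA P' x' > 0"
      using that margA_nonneg[OF P, of x] margA_nonneg[OF P', of x'] by (auto simp: less_le)
    moreover have "P (x, y) > 0" "P' (x', y') > 0"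
      using that supp is_dist_nonneg[OF P, of "(x, y)"] is_dist_nonneg[OF P', of "(x', y')"]
      unfolding cond_supported_def by (auto simp: less_le)
    ultimately have "ln (P (x, y) * P' (x', y') / (margA P x * margA P' x'))
        = ln (P (x, y) / margA P x) + ln (P' (x', y') / margA P' x')"
      by (simp add: ln_div ln_mult)
    thus ?thesis by (simp add: algebra_simps)
  qed
  have "avg_log_cond (pair_product P P') (y, y') = (\<Sum>x\<in>?S. \<Sum>x'\<in>?S'. margA P' x' * ?L x + margA P x * ?L' x')"
    unfolding avg_log_cond_def supp_prod sum.cartesian_product'
    by (intro sum.cong refl) (simp add: margA_pair_product, simp add: pair_product_def summand)
  also have "\<dots> = (\<Sum>x\<in>?S. (\<Sum>x'\<in>?S'. margA P' x') * ?L x + margA P x * avg_log_cond P' y')"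
    unfolding avg_log_cond_def by (simp add: sum.distrib sum_distrib_left sum_distrib_right)
  also have "\<dots> = avg_log_cond P y + avg_log_cond P' y'"
    unfolding sum_margA_nonzero[OF P']
    by (simp add: sum.distrib sum_distrib_right[symmetric] sum_margA_nonzero[OF P]
        avg_log_cond_def[of P y, symmetric])
  finally show ?thesis .
qed

lemma geomean_mass_pair_product:
  assumes "is_dist P" and "is_dist P'"
  shows "geomean_mass (pair_product P P') = geomean_mass P * geomean_mass P'"
proof -
  have "geomean_cond (pair_product P P') (y, y') = geomean_cond P y * geomean_cond P' y'" for y y'
    by (simp add: geomean_cond_def cond_supported_pair_product[OF assms]
        avg_log_cond_pair_product[OF assms] exp_add)
  thus ?thesis unfolding geomean_mass_def sum_UNIV_pair by (simp add: sum_product)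
qed

theorem mainTheorem9:
  fixes P :: "'x::finite \<times> 'y::finite \<Rightarrow> real"
    and P' :: "'x'::finite \<times> 'y'::finite \<Rightarrow> real"
  assumes "is_dist P" and "is_dist P'"
  shows "U (\<lambda>((x, x'), (y, y')). P (x, y) * P' (x', y')) = U P + U P'"
proof -
  have "(\<lambda>((x, x'), (y, y')). P (x, y) * P' (x', y')) = pair_product P P'"
    by (simp add: pair_product_def)
  moreover have "geomean_mass P \<ge> 0" "geomean_mass P' \<ge> 0"
    by (simp_all add: geomean_mass_nonneg)
  ultimately show ?thesis
    using assms
    by (simp add: U_eq_neg_ln_geomean_mass is_dist_pair_product geomean_mass_pair_product ln_mult)
qed

end
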